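(* Let $W:\mathcal X\to\mathcal Y$ be a cyclo-symmetric DMC with $|\mathcal Y|>2|\mathcal X|$, let $L\ge2|\mathcal X|$ be a multiple of $|\mathcal X|$, and let the input distribution be uniform, $\pi(x)=1/|\mathcal X|$. Then $$\min\big\{I(W)-I(Q):\ Q\preccurlyeq W,\ |Q|\le L,\ Q\text{ cyclo-symmetric}\big\}\le \nu(|\mathcal X|)\,L^{-\frac{2}{|\mathcal X|-1}}.$$
   Context: $I(\cdot)$ is input–output mutual information (natural log) under the given input distribution. $Q\preccurlyeq W$ means there is a channel $\Phi$ from the output alphabet of $W$ to that of $Q$ with $Q(z|x)=\sum_yW(y|x)\Phi(z|y)$; $|Q|$ is the output alphabet size of $Q$. A channel $W:\mathcal X\to\mathcal Y$ is cyclo-symmetric if $\mathcal X=\{0,1,\dots,|\mathcal X|-1\}$, $|\mathcal Y|$ is a multiple of $|\mathcal X|$, and $\mathcal Y$ is partitioned into $|\mathcal Y|/|\mathcal X|$ disjoint sets $\mathcal Y_i=\{y_i^{(0)},\dots,y_i^{(|\mathcal X|-1)}\}$ such that $W(y_i^{(0)}|x)=W(y_i^{(\theta)}|x+\theta)$ for all $i$, all $x$ and all $0\le\theta\le|\mathcal X|-1$, with $x+\theta$ taken modulo $|\mathcal X|$. The constant is $$\nu(n)=\frac{\pi n(n-1)}{2\left(\sqrt{1+\frac{1}{2(n-1)}}-1\right)^2}\left(\frac{2n}{\Gamma\!\left(1+\frac{n-1}{2}\right)}\right)^{\frac{2}{n-1}},$$ with $\pi=3.14159\ldots$ and $\Gamma$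 the Gamma function. *)

theory Defs
  imports "HOL-Analysis.Analysis"
begin

text \<open>Input alphabet is {0..<q} (q = |X|); channel W x y = W(y|x), output alphabet a finite set Y.\<close>

definition channel :: "nat \<Rightarrow> 'y set \<Rightarrow> (nat \<Rightarrow> 'y \<Rightarrow> real) \<Rightarrow> bool" where
  "channel q Y W \<longleftrightarrow> finite Y \<and>
     (\<forall>x<q. (\<forall>y\<in>Y. W x y \<ge> 0) \<and> (\<Sum>y\<in>Y. W x y) = 1)"

text \<open>Input-output mutual information (natural log) under input distribution p on {0..<q};
  terms with W x y = 0 contribute 0 (convention 0 ln 0 = 0).\<close>
definition out_prob :: "nat \<Rightarrow> (nat \<Rightarrow> real) \<Rightarrow> (nat \<Rightarrow> 'y \<Rightarrow> real) \<Rightarrow> 'y \<Rightarrow> real" where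
  "out_prob q p W y = (\<Sum>x<q. p x * W x y)"

definition mutual_info :: "nat \<Rightarrow> 'y set \<Rightarrow> (nat \<Rightarrow> real) \<Rightarrow> (nat \<Rightarrow> 'y \<Rightarrow> real) \<Rightarrow> real" where
  "mutual_info q Y p W =
     (\<Sum>x<q. \<Sum>y\<in>Y. p x * W x y * ln (W x y / out_prob q p W y))"

definition uniform :: "nat \<Rightarrow> nat \<Rightarrow> real" where
  "uniform q x = 1 / real q"

definition degraded :: "nat \<Rightarrow> 'y set \<Rightarrow> (nat \<Rightarrow> 'y \<Rightarrow> real) \<Rightarrow> 'z set \<Rightarrow> (nat \<Rightarrow> 'z \<Rightarrow> real) \<Rightarrow> bool" where
  "degraded q Y W Z Q \<longleftrightarrow>
     (\<exists>\<Phi> :: 'y \<Rightarrow> 'z \<Rightarrow> real.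
        (\<forall>y\<in>Y. (\<forall>z\<in>Z. \<Phi> y z \<ge> 0) \<and> (\<Sum>z\<in>Z. \<Phi> y z) = 1) \<and>
        (\<forall>x<q. \<forall>z\<in>Z. Q x z = (\<Sum>y\<in>Y. W x y * \<Phi> y z)))"

definition cyclo_symmetric :: "nat \<Rightarrow> 'y set \<Rightarrow> (nat \<Rightarrow> 'y \<Rightarrow> real) \<Rightarrow> bool" where
  "cyclo_symmetric q Y W \<longleftrightarrow> q dvd card Y \<and>
     (\<exists>(m::nat) (f :: nat \<Rightarrow> nat \<Rightarrow> 'y).
        bij_betw (\<lambda>(i, t). f i t) ({..<m} \<times> {..<q}) Y \<and>
        (\<forall>i<m. \<forall>x<q. \<forall>\<theta><q. W x (f i 0) = W ((x + \<theta>) mod q) (f i \<theta>)))"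

definition nu :: "nat \<Rightarrow> real" where
  "nu n = pi * real n * (real n - 1) /
          (2 * (sqrt (1 + 1 / (2 * (real n - 1))) - 1)^2) *
          (2 * real n / Gamma (1 + (real n - 1) / 2)) powr (2 / (real n - 1))"

end

theory Submission
  imports Defs
begin

text \<open>Split the outputs of \<open>W\<close> into the blocks of \<open>q\<close> outputs related by cyclic shifts, rotate every
  block so that its most likely input comes first, and record for each of the other \<open>q - 1\<close>
  positions the bin of the square-root grid \<open>{(k / N)^2}\<close> containing the posterior probability of
  that input.  Merging the blocks with equal records position by position gives a cyclo-symmetric
  degraded channel with \<open>q * N ^ (q - 1)\<close> outputs.  By \<open>ln u \<le> u - 1\<close> the loss of mutual
  information is at most the chi-square distance between the posteriors in a merged cell and their
  mean, which the bin width bounds by \<open>9 (q^2 - 1) / (4 N^2)\<close>; taking \<open>N\<close> close to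
  \<open>(L / q) powr (1 / (q - 1))\<close> gives the bound.\<close>

section \<open>Chi-square distance of a cell\<close>

lemma weighted_sum_ge:
  fixes A p :: "'y \<Rightarrow> real"
  assumes "\<And>y. y \<in> S \<Longrightarrow> 0 \<le> A y" and "\<And>y. y \<in> S \<Longrightarrow> c \<le> p y"
  shows "c * (\<Sum>y\<in>S. A y) \<le> (\<Sum>y\<in>S. A y * p y)"
  unfolding sum_distrib_left using assms by (intro sum_mono) (simp add: mult.commute[of c] mult_left_mono)

lemma weighted_sum_le:
  fixes A p :: "'y \<Rightarrow> real"
  assumes "\<And>y. y \<in> S \<Longrightarrow> 0 \<le> A y" and "\<And>y. y \<in> S \<Longrightarrow> p y \<le> c"
  shows "(\<Sum>y\<in>S. A y * p y) \<le> c * (\<Sum>y\<in>S. A y)"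
  unfolding sum_distrib_left using assms by (intro sum_mono) (simp add: mult.commute[of c] mult_left_mono)

lemma weighted_variance_le:
  fixes A p :: "'y \<Rightarrow> real"
  assumes "\<And>y. y \<in> S \<Longrightarrow> 0 \<le> A y" and "\<And>y. y \<in> S \<Longrightarrow> p y \<in> {\<alpha>..\<beta>}"
    and "(\<Sum>y\<in>S. A y * p y) = r * (\<Sum>y\<in>S. A y)"
  shows "(\<Sum>y\<in>S. A y * (p y - r)^2) \<le> (r - \<alpha>) * (\<beta> - r) * (\<Sum>y\<in>S. A y)"
proof -
  have "(\<Sum>y\<in>S. A y * (p y - r)^2) \<le> (\<Sum>y\<in>S. A y * ((p y - r)^2 + (p y - \<alpha>) * (\<beta> - p y)))"
    using assms(1,2) by (intro sum_mono mult_left_mono) auto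
  also have "\<dots> = (\<Sum>y\<in>S. A y * p y * (\<alpha> + \<beta> - 2 * r) + (r^2 - \<alpha> * \<beta>) * A y)"
    by (intro sum.cong refl) (simp add: power2_eq_square algebra_simps)
  also have "\<dots> = (\<Sum>y\<in>S. A y * p y) * (\<alpha> + \<beta> - 2 * r) + (r^2 - \<alpha> * \<beta>) * (\<Sum>y\<in>S. A y)"
    by (simp add: sum.distrib sum_distrib_left sum_distrib_right)
  also have "\<dots> = (r - \<alpha>) * (\<beta> - r) * (\<Sum>y\<in>S. A y)"
    using assms(3) by (simp add: power2_eq_square algebra_simps)
  finally show ?thesis .
qed

lemma sqrt_bin_width_le:
  fixes k :: nat and N r :: real
  assumes "0 < N" and "r \<in> {(real k / N)^2..((real k + 1) / N)^2}"
  shows "(r - (real k / N)^2) * (((real k + 1) / N)^2 - r) \<le> 9/4 * r / N^2"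
proof (cases "k = 0")
  case True
  then show ?thesis using assms by (simp add: mult_left_mono field_simps)
next
  case False
  have amgm: "u * v \<le> ((u + v) / 2)^2" for u v :: real
  proof -
    have "0 \<le> (u - v)^2" by simp
    then show ?thesis by (simp add: power2_eq_square field_simps)
  qed
  have "(r - (real k / N)^2) * (((real k + 1) / N)^2 - r) \<le> ((((real k + 1) / N)^2 - (real k / N)^2) / 2)^2"
    using amgm[of "r - (real k / N)^2" "((real k + 1) / N)^2 - r"] by simp
  also have "\<dots> = ((2 * real k + 1) / (2 * N^2))^2"
    using assms(1) by (simp add: power2_eq_square field_simps)
  also have "\<dots> \<le> ((3 * real k) / (2 * N^2))^2"
    using False by (intro power_mono divide_right_mono) auto
  also have "\<dots> = 9/4 * (real k / N)^2 / N^2"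
    by (simp add: power2_eq_square field_simps)
  also have "\<dots> \<le> 9/4 * r / N^2"
    using assms by (intro divide_right_mono mult_left_mono) auto
  finally show ?thesis .
qed

lemma sqrt_bin_floor:
  fixes N p :: real
  assumes "0 < N" and "0 \<le> p"
  shows "p \<in> {(real (nat \<lfloor>N * sqrt p\<rfloor>) / N)^2..((real (nat \<lfloor>N * sqrt p\<rfloor>) + 1) / N)^2}"
proof -
  define k where "k = real (nat \<lfloor>N * sqrt p\<rfloor>)"
  have "k \<le> N * sqrt p" and "N * sqrt p \<le> k + 1" and "0 \<le> k"
    using assms by (simp_all add: k_def)
  then have "k / N \<le> sqrt p" and "sqrt p \<le> (k + 1) / N"
    using assms by (simp_all add: field_simps)
  then have "(k / N)^2 \<le> (sqrt p)^2" and "(sqrt p)^2 \<le> ((k + 1) / N)^2"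
    using \<open>0 \<le> k\<close> assms by (intro power_mono; simp)+
  then show ?thesis using assms by (simp add: k_def)
qed

lemma sum_zero_sq_le:
  fixes a :: "'x \<Rightarrow> real"
  assumes "finite X" and "j \<in> X" and "(\<Sum>x\<in>X. a x) = 0"
  shows "(a j)^2 \<le> (real (card X) - 1) * (\<Sum>x\<in>X - {j}. (a x)^2)"
proof -
  have "a j = - (\<Sum>x\<in>X - {j}. a x)"
    using assms by (simp add: sum.remove)
  then have "(a j)^2 = (\<Sum>x\<in>X - {j}. a x)^2" by simp
  also have "\<dots> \<le> (\<Sum>x\<in>X - {j}. (a x)^2) * real (card (X - {j}))"
    by (rule sum_squared_le_sum_of_squares)
  moreover have "1 \<le> card X" using assms by (simp add: Suc_le_eq card_gt_0_iff) blast
  ultimately show ?thesis using assms by (simp add: of_nat_diff mult.commute)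
qed

lemma weighted_chi_square_eq_variance:
  fixes A p :: "'y \<Rightarrow> real"
  assumes "finite S" and "\<And>y. y \<in> S \<Longrightarrow> 0 < A y" and "\<And>y. y \<in> S \<Longrightarrow> 0 \<le> p y"
    and "0 < (\<Sum>y\<in>S. A y)" and r: "r = (\<Sum>y\<in>S. A y * p y) / (\<Sum>y\<in>S. A y)"
  shows "(\<Sum>y\<in>S. A y * (p y)^2 / r) - (\<Sum>y\<in>S. A y * p y) = (\<Sum>y\<in>S. A y * (p y - r)^2) / r"
proof (cases "r = 0")
  case True
  then have "(\<Sum>y\<in>S. A y * p y) = 0" using assms(4) r by simp
  moreover have "\<And>y. y \<in> S \<Longrightarrow> 0 \<le> A y * p y" using assms(2,3) by (simp add: less_imp_le)
  ultimately have "\<forall>y\<in>S. A y * p y = 0" using assms(1) by (simp add: sum_nonneg_eq_0_iff)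
  then have "\<forall>y\<in>S. p y = 0" using assms(2) by force
  then show ?thesis using True by simp
next
  case False
  have mean: "(\<Sum>y\<in>S. A y * p y) = r * (\<Sum>y\<in>S. A y)" using assms(4) r by simp
  have "(\<Sum>y\<in>S. A y * (p y - r)^2)
      = (\<Sum>y\<in>S. A y * (p y)^2 - 2 * r * (A y * p y) + r^2 * A y)"
    by (intro sum.cong refl) (simp add: power2_eq_square algebra_simps)
  also have "\<dots> = (\<Sum>y\<in>S. A y * (p y)^2) - r^2 * (\<Sum>y\<in>S. A y)"
    by (simp add: sum.distrib sum_subtractf mean flip: sum_distrib_left) (simp add: power2_eq_square)
  finally show ?thesis
    using False by (simp add: mean field_simps power2_eq_square flip: sum_divide_distrib)
qed

lemma weighted_variance_sqrt_bin_le: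
  fixes A p :: "'y \<Rightarrow> real" and N :: real and k :: nat
  assumes N: "0 < N" and A_nonneg: "\<And>y. y \<in> S \<Longrightarrow> 0 \<le> A y" and T: "0 < (\<Sum>y\<in>S. A y)"
    and bin: "\<And>y. y \<in> S \<Longrightarrow> p y \<in> {(real k / N)^2..((real k + 1) / N)^2}"
    and r: "r = (\<Sum>y\<in>S. A y * p y) / (\<Sum>y\<in>S. A y)"
  shows "(\<Sum>y\<in>S. A y * (p y - r)^2) \<le> 9/4 * r / N^2 * (\<Sum>y\<in>S. A y)"
proof -
  have mean: "(\<Sum>y\<in>S. A y * p y) = r * (\<Sum>y\<in>S. A y)" using T r by simp
  have "(real k / N)^2 * (\<Sum>y\<in>S. A y) \<le> r * (\<Sum>y\<in>S. A y)"
    and "r * (\<Sum>y\<in>S. A y) \<le> ((real k + 1) / N)^2 * (\<Sum>y\<in>S. A y)"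
    unfolding mean[symmetric] using bin A_nonneg by (auto intro: weighted_sum_ge weighted_sum_le)
  then have "r \<in> {(real k / N)^2..((real k + 1) / N)^2}" using T by simp
  have "(\<Sum>y\<in>S. A y * (p y - r)^2) \<le> (r - (real k / N)^2) * (((real k + 1) / N)^2 - r) * (\<Sum>y\<in>S. A y)"
    using A_nonneg bin mean by (rule weighted_variance_le)
  also have "\<dots> \<le> 9/4 * r / N^2 * (\<Sum>y\<in>S. A y)"
    using sqrt_bin_width_le[OF N \<open>r \<in> _\<close>] T by (intro mult_right_mono) auto
  finally show ?thesis .
qed

lemma weighted_variance_complement_le:
  fixes A :: "'y \<Rightarrow> real" and p :: "nat \<Rightarrow> 'y \<Rightarrow> real" and r :: "nat \<Rightarrow> real"
  assumes "j < q" and "\<And>y. y \<in> S \<Longrightarrow> 0 \<le> A y"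
    and "\<And>y. y \<in> S \<Longrightarrow> (\<Sum>x<q. p x y) = (\<Sum>x<q. r x)"
  shows "(\<Sum>y\<in>S. A y * (p j y - r j)^2)
    \<le> (real q - 1) * (\<Sum>x\<in>{..<q} - {j}. \<Sum>y\<in>S. A y * (p x y - r x)^2)"
proof -
  have "(p j y - r j)^2 \<le> (real q - 1) * (\<Sum>x\<in>{..<q} - {j}. (p x y - r x)^2)" if "y \<in> S" for y
    using sum_zero_sq_le[of "{..<q}" j "\<lambda>x. p x y - r x"] assms(1) assms(3)[OF that]
    by (simp add: sum_subtractf)
  then have "(\<Sum>y\<in>S. A y * (p j y - r j)^2)
      \<le> (\<Sum>y\<in>S. A y * ((real q - 1) * (\<Sum>x\<in>{..<q} - {j}. (p x y - r x)^2)))"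
    using assms(2) by (intro sum_mono mult_left_mono) auto
  also have "\<dots> = (real q - 1) * (\<Sum>x\<in>{..<q} - {j}. \<Sum>y\<in>S. A y * (p x y - r x)^2)"
    by (simp add: sum_distrib_left sum.swap[of _ "{..<q} - {j}"] algebra_simps)
  finally show ?thesis .
qed

text \<open>Every coordinate other than the dominant one varies within a single bin of the square-root
  grid; the dominant coordinate, whose mean is at least \<open>1/q\<close>, is controlled through the constraint
  that the coordinates sum to one.\<close>

lemma chi_square_cell_le:
  fixes A :: "'y \<Rightarrow> real" and p :: "nat \<Rightarrow> 'y \<Rightarrow> real" and N :: real
  assumes fin: "finite S" and ne: "S \<noteq> {}" and A_pos: "\<And>y. y \<in> S \<Longrightarrow> 0 < A y"
    and p_nonneg: "\<And>x y. x < q \<Longrightarrow> y \<in> S \<Longrightarrow> 0 \<le> p x y"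
    and p_sum: "\<And>y. y \<in> S \<Longrightarrow> (\<Sum>x<q. p x y) = 1"
    and j: "j < q" and p_dominant: "\<And>y. y \<in> S \<Longrightarrow> 1 / q \<le> p j y"
    and N: "0 < N"
    and bins: "\<And>x. x < q \<Longrightarrow> x \<noteq> j \<Longrightarrow>
      \<exists>k::nat. \<forall>y\<in>S. p x y \<in> {(real k / N)^2..((real k + 1) / N)^2}"
  shows "(\<Sum>x<q. (\<Sum>y\<in>S. A y * (p x y)^2 / ((\<Sum>y\<in>S. A y * p x y) / (\<Sum>y\<in>S. A y)))
                   - (\<Sum>y\<in>S. A y * p x y))
         \<le> 9/4 * (real q^2 - 1) / N^2 * (\<Sum>y\<in>S. A y)"
proof -
  define T where "T = (\<Sum>y\<in>S. A y)"
  define r where "r x = (\<Sum>y\<in>S. A y * p x y) / T" for x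
  define V where "V x = (\<Sum>y\<in>S. A y * (p x y - r x)^2)" for x
  define K where "K = {..<q} - {j}"
  have T_pos: "0 < T" unfolding T_def using fin ne A_pos by (intro sum_pos) auto
  have A_nonneg: "\<And>y. y \<in> S \<Longrightarrow> 0 \<le> A y" using A_pos less_imp_le by blast
  have mean: "(\<Sum>y\<in>S. A y * p x y) = r x * T" for x using T_pos by (simp add: r_def)
  have r_nonneg: "0 \<le> r x" if "x < q" for x
    unfolding r_def using T_pos A_nonneg p_nonneg that by (intro divide_nonneg_pos sum_nonneg) auto
  have r_sum: "(\<Sum>x<q. r x) = 1"
  proof -
    have "(\<Sum>x<q. \<Sum>y\<in>S. A y * p x y) = (\<Sum>y\<in>S. A y * (\<Sum>x<q. p x y))"
      by (subst sum.swap) (simp add: sum_distrib_left)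
    then show ?thesis using T_pos p_sum by (simp add: r_def T_def flip: sum_divide_distrib)
  qed
  have chi_V: "(\<Sum>y\<in>S. A y * (p x y)^2 / r x) - (\<Sum>y\<in>S. A y * p x y) = V x / r x" if "x < q" for x
    unfolding V_def r_def T_def
    by (rule weighted_chi_square_eq_variance[OF fin A_pos p_nonneg[OF that] T_pos[unfolded T_def] refl])
  define c where "c = 9/4 * T / N^2"
  have c_nonneg: "0 \<le> c" using T_pos by (simp add: c_def)
  have V_bin: "V x \<le> c * r x" if x: "x < q" "x \<noteq> j" for x
  proof -
    obtain k :: nat where "\<forall>y\<in>S. p x y \<in> {(real k / N)^2..((real k + 1) / N)^2}"
      using bins[OF x] by blast
    then have "V x \<le> 9/4 * r x / N^2 * T"
      unfolding V_def r_def T_def using N A_nonneg T_pos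
      by (intro weighted_variance_sqrt_bin_le) (auto simp: T_def)
    then show ?thesis by (simp add: c_def mult.commute mult.left_commute)
  qed
  have K_chi: "V x / r x \<le> c" if "x \<in> K" for x
    using V_bin[of x] that r_nonneg[of x] c_nonneg by (cases "r x = 0") (auto simp: K_def field_simps)
  have V_K: "(\<Sum>x\<in>K. V x) \<le> c"
  proof -
    have "(\<Sum>x\<in>K. r x) \<le> 1"
      using sum.remove[of "{..<q}" j r] r_sum r_nonneg[OF j] j by (simp add: K_def)
    moreover have "(\<Sum>x\<in>K. V x) \<le> c * (\<Sum>x\<in>K. r x)"
      unfolding sum_distrib_left using V_bin by (intro sum_mono) (simp add: K_def)
    ultimately show ?thesis using c_nonneg by (meson mult_left_le order_trans)
  qed
  have V_j: "V j \<le> (real q - 1) * (\<Sum>x\<in>K. V x)"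
    unfolding V_def K_def using j A_nonneg p_sum r_sum by (intro weighted_variance_complement_le) auto
  have "1 / q * T \<le> (\<Sum>y\<in>S. A y * p j y)"
    unfolding T_def using A_nonneg p_dominant by (rule weighted_sum_ge)
  then have "1 / q * T \<le> r j * T" by (simp only: mean)
  then have r_j: "1 / q \<le> r j" using T_pos by (simp only: mult_le_cancel_right_pos)
  have q1: "1 \<le> real q" using j by simp
  have j_chi: "V j / r j \<le> real q * ((real q - 1) * c)"
  proof -
    have V_nonneg: "0 \<le> V j" unfolding V_def using A_nonneg by (simp add: sum_nonneg)
    have "0 < 1 / real q" using q1 by simp
    then have "0 < r j" using r_j by linarith
    then have "V j / r j \<le> V j / (1 / q)"
      using \<open>0 < 1 / real q\<close> by (intro divide_left_mono[OF r_j V_nonneg]) simp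
    also have "\<dots> = real q * V j" by simp
    also have "\<dots> \<le> real q * ((real q - 1) * c)"
    proof -
      have "(real q - 1) * (\<Sum>x\<in>K. V x) \<le> (real q - 1) * c"
        using V_K q1 by (intro mult_left_mono) auto
      with V_j show ?thesis by (intro mult_left_mono) auto
    qed
    finally show ?thesis .
  qed
  have "(\<Sum>x<q. (\<Sum>y\<in>S. A y * (p x y)^2 / r x) - (\<Sum>y\<in>S. A y * p x y)) = V j / r j + (\<Sum>x\<in>K. V x / r x)"
    using j chi_V by (simp add: K_def sum.remove[of "{..<q}" j])
  also have "\<dots> \<le> real q * ((real q - 1) * c) + (real q - 1) * c"
  proof (rule add_mono[OF j_chi])
    have "(\<Sum>x\<in>K. V x / r x) \<le> (\<Sum>x\<in>K. c)" using K_chi by (rule sum_mono)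
    then show "(\<Sum>x\<in>K. V x / r x) \<le> (real q - 1) * c" using j by (simp add: K_def of_nat_diff)
  qed
  also have "\<dots> = (real q^2 - 1) * c"
    by (simp only: power2_eq_square left_diff_distrib right_diff_distrib)
  also have "\<dots> = 9/4 * (real q^2 - 1) / N^2 * T" by (simp add: c_def)
  finally show ?thesis unfolding r_def T_def .
qed

section \<open>Merging outputs\<close>

definition merge_outputs :: "'y set \<Rightarrow> ('y \<Rightarrow> 'z) \<Rightarrow> (nat \<Rightarrow> 'y \<Rightarrow> real) \<Rightarrow> nat \<Rightarrow> 'z \<Rightarrow> real" where
  "merge_outputs Y \<sigma> W x z = (\<Sum>y\<in>{y\<in>Y. \<sigma> y = z}. W x y)"

definition posterior :: "nat \<Rightarrow> (nat \<Rightarrow> 'y \<Rightarrow> real) \<Rightarrow> 'y \<Rightarrow> nat \<Rightarrow> real" where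
  "posterior q W y x = W x y / (\<Sum>x'<q. W x' y)"

definition sqrt_binned :: "nat \<Rightarrow> real \<Rightarrow> (nat \<Rightarrow> 'y \<Rightarrow> real) \<Rightarrow> 'y set \<Rightarrow> bool" where
  "sqrt_binned q N W S \<longleftrightarrow> (\<exists>j<q. (\<forall>y\<in>S. 1 / q \<le> posterior q W y j) \<and>
     (\<forall>x<q. x \<noteq> j \<longrightarrow>
        (\<exists>k::nat. \<forall>y\<in>S. posterior q W y x \<in> {(real k / N)^2..((real k + 1) / N)^2})))"

lemma channel_merge_outputs:
  assumes "channel q Y W" and "finite Z" and "\<sigma> ` Y \<subseteq> Z"
  shows "channel q Z (merge_outputs Y \<sigma> W)"
  unfolding channel_def merge_outputs_def
proof (intro conjI allI impI ballI)
  fix x assume "x < q"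
  have "finite Y" using assms(1) by (simp add: channel_def)
  then have "(\<Sum>z\<in>Z. \<Sum>y\<in>{y\<in>Y. \<sigma> y = z}. W x y) = (\<Sum>y\<in>Y. W x y)"
    using sum.group[OF _ assms(2,3)] by blast
  then show "(\<Sum>z\<in>Z. \<Sum>y\<in>{y\<in>Y. \<sigma> y = z}. W x y) = 1"
    using assms(1) \<open>x < q\<close> by (simp add: channel_def)
  fix z show "0 \<le> (\<Sum>y\<in>{y\<in>Y. \<sigma> y = z}. W x y)"
    using assms(1) \<open>x < q\<close> by (auto simp: channel_def intro: sum_nonneg)
qed (use assms in simp)

lemma degraded_merge_outputs:
  assumes "channel q Y W" and "finite Z" and "\<sigma> ` Y \<subseteq> Z"
  shows "degraded q Y W Z (merge_outputs Y \<sigma> W)"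
  unfolding degraded_def
proof (intro exI[of _ "\<lambda>y z. if \<sigma> y = z then 1 else 0"] conjI ballI allI impI)
  fix y assume "y \<in> Y"
  then show "(\<Sum>z\<in>Z. if \<sigma> y = z then 1 else 0) = (1::real)" using assms by auto
next
  fix x z
  show "merge_outputs Y \<sigma> W x z = (\<Sum>y\<in>Y. W x y * (if \<sigma> y = z then 1 else 0))"
    using assms(1) by (simp add: merge_outputs_def channel_def sum.inter_filter if_distrib cong: if_cong)
qed simp

lemma out_prob_merge_outputs:
  assumes "finite Y"
  shows "out_prob q p (merge_outputs Y \<sigma> W) z = (\<Sum>y\<in>{y\<in>Y. \<sigma> y = z}. out_prob q p W y)"
  using assms by (simp add: out_prob_def merge_outputs_def sum_distrib_left sum.swap[of _ "{..<q}"])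

lemma ln_ratio_mult_le:
  fixes w P Q R q :: real
  assumes "0 \<le> w" and "0 < q" and "0 < w \<Longrightarrow> 0 < P \<and> 0 < Q \<and> 0 < R"
  shows "1 / q * w * (ln (w / P) - ln (Q / R)) \<le> w^2 * R / (q * P * Q) - w / q"
proof (cases "w = 0")
  case False
  then have "0 < w" "0 < P" "0 < Q" "0 < R" using assms by auto
  then have "ln (w / P) - ln (Q / R) \<le> w * R / (P * Q) - 1"
    using ln_le_minus_one[of "w * R / (P * Q)"] by (simp add: ln_div ln_mult)
  then have "1 / q * w * (ln (w / P) - ln (Q / R)) \<le> 1 / q * w * (w * R / (P * Q) - 1)"
    using \<open>0 < w\<close> assms(2) by (intro mult_left_mono) auto
  also have "\<dots> = w^2 * R / (q * P * Q) - w / q"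
    using assms(2) \<open>0 < P\<close> \<open>0 < Q\<close> by (simp add: field_simps power2_eq_square)
  finally show ?thesis .
qed simp

lemma posterior_sum:
  assumes "0 < (\<Sum>x<q. W x y)"
  shows "(\<Sum>x<q. posterior q W y x) = 1"
  using assms by (simp add: posterior_def flip: sum_divide_distrib)

lemma merged_positive_cell_loss_le:
  fixes W :: "nat \<Rightarrow> 'y \<Rightarrow> real" and N :: real
  assumes fin: "finite S" and q: "0 < q" and N: "0 < N"
    and W_nonneg: "\<And>x y. x < q \<Longrightarrow> y \<in> S \<Longrightarrow> 0 \<le> W x y"
    and mass_pos: "\<And>y. y \<in> S \<Longrightarrow> 0 < (\<Sum>x<q. W x y)"
    and binned: "sqrt_binned q N W S"
  shows "(\<Sum>x<q. \<Sum>y\<in>S. 1 / q * W x y * (ln (W x y / out_prob q (uniform q) W y)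
            - ln ((\<Sum>y\<in>S. W x y) / (\<Sum>y\<in>S. out_prob q (uniform q) W y))))
         \<le> 9/4 * (real q^2 - 1) / N^2 * (\<Sum>y\<in>S. out_prob q (uniform q) W y)"
proof (cases "S = {}")
  case False
  define P where "P y = out_prob q (uniform q) W y" for y
  define p where "p x y = posterior q W y x" for x y
  define T where "T = (\<Sum>y\<in>S. P y)"
  have P_pos: "0 < P y" if "y \<in> S" for y
    using mass_pos[OF that] q by (simp add: P_def out_prob_def uniform_def flip: sum_divide_distrib)
  have W_eq: "W x y = q * (P y * p x y)" if "y \<in> S" for x y
    using mass_pos[OF that] q
    by (simp add: P_def p_def posterior_def out_prob_def uniform_def flip: sum_divide_distrib)
  have T_pos: "0 < T" unfolding T_def using fin False P_pos by (intro sum_pos) auto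
  have "(\<Sum>x<q. \<Sum>y\<in>S. 1 / q * W x y * (ln (W x y / P y) - ln ((\<Sum>y\<in>S. W x y) / T)))
      \<le> (\<Sum>x<q. \<Sum>y\<in>S. (W x y)^2 * T / (q * P y * (\<Sum>y\<in>S. W x y)) - W x y / q)"
  proof (intro sum_mono ln_ratio_mult_le)
    fix x y assume "x \<in> {..<q}" "y \<in> S" "0 < W x y"
    moreover have "W x y \<le> (\<Sum>y\<in>S. W x y)"
      using fin W_nonneg \<open>x \<in> _\<close> \<open>y \<in> S\<close> by (intro member_le_sum) auto
    ultimately show "0 < P y \<and> 0 < (\<Sum>y\<in>S. W x y) \<and> 0 < T" using P_pos T_pos by auto
  qed (use W_nonneg q in auto)
  also have "\<dots> = (\<Sum>x<q. (\<Sum>y\<in>S. P y * (p x y)^2 / ((\<Sum>y\<in>S. P y * p x y) / T))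
                          - (\<Sum>y\<in>S. P y * p x y))"
  proof (intro sum.cong refl)
    fix x
    define R where "R = (\<Sum>y\<in>S. P y * p x y)"
    have "(\<Sum>y\<in>S. W x y) = q * R" by (simp add: R_def W_eq sum_distrib_left)
    then have "(W x y)^2 * T / (q * P y * (\<Sum>y\<in>S. W x y)) - W x y / q
        = P y * (p x y)^2 / (R / T) - P y * p x y" if "y \<in> S" for y
      using P_pos[OF that] q T_pos by (cases "R = 0") (simp_all add: W_eq[OF that] power2_eq_square field_simps)
    then show "(\<Sum>y\<in>S. (W x y)^2 * T / (q * P y * (\<Sum>y\<in>S. W x y)) - W x y / q)
        = (\<Sum>y\<in>S. P y * (p x y)^2 / ((\<Sum>y\<in>S. P y * p x y) / T)) - (\<Sum>y\<in>S. P y * p x y)"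
      by (simp add: R_def sum_subtractf)
  qed
  also have "\<dots> \<le> 9/4 * (real q^2 - 1) / N^2 * T"
    using binned unfolding T_def sqrt_binned_def
  proof (elim exE conjE, intro chi_square_cell_le[OF fin False P_pos])
    show "\<And>x y. x < q \<Longrightarrow> y \<in> S \<Longrightarrow> 0 \<le> p x y"
      using W_nonneg mass_pos by (simp add: p_def posterior_def less_imp_le)
    show "\<And>y. y \<in> S \<Longrightarrow> (\<Sum>x<q. p x y) = 1"
      using mass_pos by (simp add: p_def posterior_sum)
  qed (auto simp: p_def N)
  finally show ?thesis unfolding P_def T_def .
qed simp

lemma zero_mass_output:
  fixes W :: "nat \<Rightarrow> 'y \<Rightarrow> real"
  assumes "\<And>x. x < q \<Longrightarrow> 0 \<le> W x y" and "(\<Sum>x<q. W x y) = 0" and "x < q"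
  shows "W x y = 0"
  using assms sum_nonneg_eq_0_iff[of "{..<q}" "\<lambda>x. W x y"] by simp

lemma merged_cell_loss_le:
  fixes W :: "nat \<Rightarrow> 'y \<Rightarrow> real" and N :: real
  assumes fin: "finite S" and q: "0 < q" and N: "0 < N"
    and W_nonneg: "\<And>x y. x < q \<Longrightarrow> y \<in> S \<Longrightarrow> 0 \<le> W x y"
    and binned: "sqrt_binned q N W {y\<in>S. 0 < (\<Sum>x<q. W x y)}"
  shows "(\<Sum>x<q. \<Sum>y\<in>S. 1 / q * W x y * (ln (W x y / out_prob q (uniform q) W y)
            - ln ((\<Sum>y\<in>S. W x y) / (\<Sum>y\<in>S. out_prob q (uniform q) W y))))
         \<le> 9/4 * (real q^2 - 1) / N^2 * (\<Sum>y\<in>S. out_prob q (uniform q) W y)"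
proof -
  define S' where "S' = {y\<in>S. 0 < (\<Sum>x<q. W x y)}"
  have drop_null: "(\<Sum>y\<in>S. g y) = (\<Sum>y\<in>S'. g y)"
    if "\<And>y. y \<in> S \<Longrightarrow> (\<Sum>x<q. W x y) = 0 \<Longrightarrow> g y = 0" for g :: "'y \<Rightarrow> real"
    using fin that W_nonneg sum_nonneg[of "{..<q}" "\<lambda>x. W x _"]
    by (intro sum.mono_neutral_right) (auto simp: S'_def less_le)
  have W_null: "W x y = 0" if "x < q" "y \<in> S" "(\<Sum>x<q. W x y) = 0" for x y
    by (rule zero_mass_output[of q W y x]) (use W_nonneg that in auto)
  have "(\<Sum>y\<in>S. out_prob q (uniform q) W y) = (\<Sum>y\<in>S'. out_prob q (uniform q) W y)"
    by (rule drop_null) (simp add: out_prob_def uniform_def flip: sum_divide_distrib)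
  moreover have "(\<Sum>y\<in>S. W x y) = (\<Sum>y\<in>S'. W x y)" if "x < q" for x
    by (rule drop_null) (simp add: W_null that)
  moreover have "(\<Sum>y\<in>S. 1 / q * W x y * g y) = (\<Sum>y\<in>S'. 1 / q * W x y * g y)" if "x < q" for x g
    by (rule drop_null) (simp add: W_null that)
  moreover have "(\<Sum>x<q. \<Sum>y\<in>S'. 1 / q * W x y * (ln (W x y / out_prob q (uniform q) W y)
            - ln ((\<Sum>y\<in>S'. W x y) / (\<Sum>y\<in>S'. out_prob q (uniform q) W y))))
         \<le> 9/4 * (real q^2 - 1) / N^2 * (\<Sum>y\<in>S'. out_prob q (uniform q) W y)"
    using fin q N W_nonneg binned by (intro merged_positive_cell_loss_le) (auto simp: S'_def)
  ultimately show ?thesis by simp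
qed

lemma mutual_info_merge_outputs_eq:
  fixes W :: "nat \<Rightarrow> 'y \<Rightarrow> real" and \<sigma> :: "'y \<Rightarrow> 'z"
  assumes "channel q Y W" and "finite Z" and "\<sigma> ` Y \<subseteq> Z"
  shows "mutual_info q Y (uniform q) W - mutual_info q Z (uniform q) (merge_outputs Y \<sigma> W)
    = (\<Sum>z\<in>Z. \<Sum>x<q. \<Sum>y\<in>{y\<in>Y. \<sigma> y = z}. 1 / q * W x y *
         (ln (W x y / out_prob q (uniform q) W y)
          - ln (merge_outputs Y \<sigma> W x z / out_prob q (uniform q) (merge_outputs Y \<sigma> W) z)))"
proof -
  have "finite Y" using assms(1) by (simp add: channel_def)
  then have group: "(\<Sum>y\<in>Y. f y) = (\<Sum>z\<in>Z. \<Sum>y\<in>{y\<in>Y. \<sigma> y = z}. f y)" for f :: "'y \<Rightarrow> real"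
    using sum.group[OF _ assms(2,3), of f] by simp
  have "mutual_info q Y (uniform q) W = (\<Sum>z\<in>Z. \<Sum>x<q. \<Sum>y\<in>{y\<in>Y. \<sigma> y = z}.
      1 / q * W x y * ln (W x y / out_prob q (uniform q) W y))"
    unfolding mutual_info_def uniform_def by (subst group) (simp add: sum.swap[of _ Z])
  moreover have "mutual_info q Z (uniform q) (merge_outputs Y \<sigma> W) = (\<Sum>z\<in>Z. \<Sum>x<q. \<Sum>y\<in>{y\<in>Y. \<sigma> y = z}.
      1 / q * W x y * ln (merge_outputs Y \<sigma> W x z / out_prob q (uniform q) (merge_outputs Y \<sigma> W) z))"
    unfolding mutual_info_def uniform_def
    by (subst sum.swap) (simp add: merge_outputs_def sum_distrib_left sum_distrib_right)
  ultimately show ?thesis by (simp add: sum_subtractf right_diff_distrib)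
qed

lemma mutual_info_merge_outputs_loss_le:
  fixes W :: "nat \<Rightarrow> 'y \<Rightarrow> real" and \<sigma> :: "'y \<Rightarrow> 'z" and N :: real
  assumes ch: "channel q Y W" and q: "0 < q" and N: "0 < N"
    and Z: "finite Z" and \<sigma>: "\<sigma> ` Y \<subseteq> Z"
    and cells: "\<And>z. z \<in> Z \<Longrightarrow> sqrt_binned q N W {y\<in>Y. \<sigma> y = z \<and> 0 < (\<Sum>x<q. W x y)}"
  shows "mutual_info q Y (uniform q) W - mutual_info q Z (uniform q) (merge_outputs Y \<sigma> W)
           \<le> 9/4 * (real q^2 - 1) / N^2"
proof -
  define Q where "Q = merge_outputs Y \<sigma> W"
  define C where "C = 9/4 * (real q^2 - 1) / N^2"
  have Y: "finite Y" and W_nonneg: "\<And>x y. x < q \<Longrightarrow> y \<in> Y \<Longrightarrow> 0 \<le> W x y"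
    using ch by (auto simp: channel_def)
  have cell: "(\<Sum>x<q. \<Sum>y\<in>{y\<in>Y. \<sigma> y = z}. 1 / q * W x y * (ln (W x y / out_prob q (uniform q) W y)
        - ln (Q x z / out_prob q (uniform q) Q z))) \<le> C * out_prob q (uniform q) Q z" if "z \<in> Z" for z
    unfolding Q_def C_def out_prob_merge_outputs[OF Y] merge_outputs_def
    using Y q N W_nonneg cells[OF that] by (intro merged_cell_loss_le) (auto simp: conj_assoc)
  have "(\<Sum>z\<in>Z. out_prob q (uniform q) Q z) = (\<Sum>x<q. (\<Sum>z\<in>Z. Q x z) / q)"
    by (simp add: out_prob_def uniform_def sum.swap[of _ Z] sum_divide_distrib)
  also have "\<dots> = 1"
    using channel_merge_outputs[OF ch Z \<sigma>] q by (simp add: channel_def Q_def)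
  finally have "(\<Sum>z\<in>Z. C * out_prob q (uniform q) Q z) = C" by (simp flip: sum_distrib_left)
  moreover have "mutual_info q Y (uniform q) W - mutual_info q Z (uniform q) Q
      \<le> (\<Sum>z\<in>Z. C * out_prob q (uniform q) Q z)"
    unfolding Q_def mutual_info_merge_outputs_eq[OF ch Z \<sigma>]
    using cell by (intro sum_mono) (simp add: Q_def)
  ultimately show ?thesis by (simp add: Q_def C_def)
qed

section \<open>The constant \<open>nu\<close>\<close>

lemma Gamma_half_sq_le_fact: "Gamma (1 + real m / 2) ^ 2 \<le> fact m"
proof -
  have "(ln \<circ> Gamma) ((1 - 1/2) *\<^sub>R 1 + (1/2) *\<^sub>R (1 + real m))
      \<le> (1 - 1/2) * (ln \<circ> Gamma) 1 + (1/2) * (ln \<circ> Gamma) (1 + real m)"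
    by (rule convex_onD[OF log_convex_Gamma_real]) auto
  moreover have "(1 - 1/2) *\<^sub>R 1 + (1/2) *\<^sub>R (1 + real m) = 1 + real m / 2" by (simp add: field_simps)
  moreover have "Gamma (1 + real m) = fact m" using Gamma_fact[of m, where 'a=real] by simp
  ultimately have "2 * ln (Gamma (1 + real m / 2)) \<le> ln (fact m)" by simp
  moreover have "0 < Gamma (1 + real m / 2)" by (intro Gamma_real_pos) (simp add: add_pos_nonneg)
  ultimately have "ln (Gamma (1 + real m / 2) ^ 2) \<le> ln (fact m)" by (simp add: ln_realpow)
  then show ?thesis using \<open>0 < Gamma _\<close> by simp
qed

lemma Gamma_half_powr_le:
  assumes "1 \<le> m"
  shows "Gamma (1 + real m / 2) powr (2 / real m) \<le> real m"
proof -
  define g where "g = Gamma (1 + real m / 2)"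
  have g_pos: "0 < g" unfolding g_def by (intro Gamma_real_pos) (simp add: add_pos_nonneg)
  have "g^2 \<le> real m powr real m"
  proof -
    have "g^2 \<le> fact m" unfolding g_def by (rule Gamma_half_sq_le_fact)
    also have "\<dots> \<le> real (m ^ m)" by (rule fact_le_power)
    also have "\<dots> = real m ^ m" by simp
    also have "\<dots> = real m powr real m" using assms by (intro powr_realpow[symmetric]) simp
    finally show ?thesis .
  qed
  have "g powr (2 / real m) = (g powr 2) powr (1 / real m)" by (simp add: powr_powr)
  also have "\<dots> = (g^2) powr (1 / real m)" using g_pos by (simp add: powr_numeral)
  also have "\<dots> \<le> (real m powr real m) powr (1 / real m)"
    using \<open>g^2 \<le> _\<close> g_pos by (intro powr_mono2) auto
  also have "\<dots> = real m" using assms by (simp add: powr_powr)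
  finally show ?thesis unfolding g_def .
qed

lemma nu_ge:
  assumes "2 \<le> q"
  shows "8 * pi * real q * (real q - 1)^2 * real q powr (2 / (real q - 1)) \<le> nu q"
proof -
  define n where "n = real q"
  define a where "a = n - 1"
  have n2: "2 \<le> n" and a1: "1 \<le> a" using assms by (simp_all add: n_def a_def)
  define s where "s = sqrt (1 + 1 / (2 * a))"
  have s_lower: "0 < s - 1" unfolding s_def using a1 by simp
  have "s \<le> sqrt ((1 + 1 / (4 * a))^2)" unfolding s_def using a1
    by (intro real_sqrt_le_mono) (simp add: power2_eq_square field_simps)
  then have "s - 1 \<le> 1 / (4 * a)" using a1 by simp
  then have "(s - 1)^2 \<le> (1 / (4 * a))^2" using s_lower by (intro power_mono) auto
  then have "pi * n * a / (2 * (1 / (4 * a))^2) \<le> pi * n * a / (2 * (s - 1)^2)"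
    using s_lower a1 n2 by (intro divide_left_mono mult_pos_pos) auto
  moreover have "pi * n * a / (2 * (1 / (4 * a))^2) = 8 * pi * n * a^3"
    using a1 by (simp add: field_simps power2_eq_square power3_eq_cube)
  ultimately have first: "8 * pi * n * a^3 \<le> pi * n * a / (2 * (s - 1)^2)" by simp
  define g where "g = Gamma (1 + a / 2)"
  have g_pos: "0 < g" unfolding g_def using a1 by (intro Gamma_real_pos) simp
  have "g powr (2 / a) \<le> a"
    using Gamma_half_powr_le[of "q - 1"] assms by (simp add: g_def a_def n_def of_nat_diff)
  then have "n powr (2 / a) / a \<le> (2 * n) powr (2 / a) / g powr (2 / a)"
    using g_pos n2 a1 by (intro frac_le powr_mono2) auto
  also have "\<dots> = (2 * n / g) powr (2 / a)" using g_pos n2 by (simp add: powr_divide)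
  finally have second: "n powr (2 / a) / a \<le> (2 * n / g) powr (2 / a)" .
  have "8 * pi * n * a^2 * n powr (2 / a) = (8 * pi * n * a^3) * (n powr (2 / a) / a)"
    using a1 by (simp add: power2_eq_square power3_eq_cube)
  also have "\<dots> \<le> (pi * n * a / (2 * (s - 1)^2)) * (2 * n / g) powr (2 / a)"
    using first second a1 n2 by (intro mult_mono) auto
  also have "\<dots> = nu q" by (simp add: nu_def n_def a_def s_def g_def)
  finally show ?thesis by (simp add: n_def a_def)
qed

lemma nu_bound:
  assumes "2 \<le> q"
  shows "9 * (real q^2 - 1) * real q powr (2 / (real q - 1)) \<le> nu q"
proof -
  define n where "n = real q"
  have n2: "2 \<le> n" using assms by (simp add: n_def)
  have "pi * 1 \<le> pi * (n - 1)" using n2 by (intro mult_left_mono) auto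
  then have "3 \<le> pi * (n - 1)" using pi_gt3 by linarith
  then have "8 * n * 3 \<le> 8 * n * (pi * (n - 1))" using n2 by (intro mult_left_mono) auto
  moreover have "9 * (n + 1) \<le> 8 * n * 3" using n2 by simp
  ultimately have "9 * (n + 1) \<le> 8 * n * (pi * (n - 1))" by (rule order_trans[rotated])
  then have "9 * (n + 1) * (n - 1) \<le> 8 * n * (pi * (n - 1)) * (n - 1)"
    using n2 by (intro mult_right_mono) auto
  then have "9 * (n^2 - 1) \<le> 8 * pi * n * (n - 1)^2"
    by (simp add: power2_eq_square algebra_simps)
  then have "9 * (n^2 - 1) * n powr (2 / (n - 1)) \<le> 8 * pi * n * (n - 1)^2 * n powr (2 / (n - 1))"
    by (intro mult_right_mono) auto
  with nu_ge[OF assms] show ?thesis by (simp add: n_def)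
qed
lemma exists_nat_root_approx:
  fixes x :: real and k :: nat
  assumes "1 \<le> x" and "1 \<le> k"
  shows "\<exists>N::nat. 1 \<le> N \<and> real N ^ k \<le> x \<and> x powr (2 / k) \<le> 4 * (real N)^2"
proof -
  define t where "t = x powr (1 / k)"
  define N where "N = nat \<lfloor>t\<rfloor>"
  have t1: "1 \<le> t" unfolding t_def using assms by (intro ge_one_powr_ge_zero) auto
  then have N1: "1 \<le> N" by (simp add: N_def le_nat_iff)
  then have "1 \<le> real N" by simp
  have "real N \<le> t" and "t < real N + 1" using t1 by (simp_all add: N_def)
  have "real N ^ k \<le> t ^ k" using \<open>real N \<le> t\<close> by (intro power_mono) auto
  also have "\<dots> = x" using t1 assms by (simp add: t_def powr_realpow[symmetric] powr_powr)
  finally have "real N ^ k \<le> x" .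
  have "x powr (2 / k) = t^2" using t1 by (simp add: t_def powr_powr powr_numeral[symmetric])
  also have "\<dots> \<le> (2 * real N)^2"
    using \<open>t < _\<close> \<open>1 \<le> real N\<close> t1 by (intro power_mono) linarith+
  finally show ?thesis using N1 \<open>real N ^ k \<le> x\<close> by (auto simp: power_mult_distrib)
qed

lemma exists_grid_resolution:
  assumes "1 \<le> q" and "2 * q \<le> L"
  shows "\<exists>N::nat. 1 \<le> N \<and> q * N^(q - 1) \<le> L \<and>
           9/4 * (real q^2 - 1) / (real N)^2 \<le> nu q * real L powr (- 2 / (real q - 1))"
proof (cases "q = 1")
  case True
  then show ?thesis using assms by (intro exI[of _ 1]) (simp add: nu_def)
next
  case False
  then have q2: "2 \<le> q" using assms by simp
  define e where "e = 2 / (real q - 1)"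
  have "1 \<le> real L / real q" using assms by (simp add: field_simps)
  moreover have "1 \<le> q - 1" and "real (q - 1) = real q - 1" using q2 by (simp_all add: of_nat_diff)
  ultimately obtain N :: nat where N1: "1 \<le> N" and "real N ^ (q - 1) \<le> real L / real q"
    and N_ge: "(real L / real q) powr e \<le> 4 * (real N)^2"
    using exists_nat_root_approx[of "real L / real q" "q - 1"] by (auto simp: e_def)
  then have "real q * real N ^ (q - 1) \<le> real L" using q2 by (simp add: field_simps)
  then have "q * N^(q - 1) \<le> L" by (metis of_nat_le_iff of_nat_mult of_nat_power)
  moreover have "9/4 * (real q^2 - 1) / (real N)^2 \<le> nu q * real L powr (- e)"
  proof -
    have "1 / (real N)^2 \<le> 4 / (real L / real q) powr e"
      using N_ge N1 q2 assms by (simp add: field_simps)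
    also have "\<dots> = 4 * real q powr e * real L powr (- e)"
      using q2 by (simp add: powr_divide powr_minus field_simps)
    finally have "9/4 * (real q^2 - 1) * (1 / (real N)^2)
        \<le> 9/4 * (real q^2 - 1) * (4 * real q powr e * real L powr (- e))"
      using q2 one_le_power[of "real q" 2] by (intro mult_left_mono) auto
    also have "\<dots> = 9 * (real q^2 - 1) * real q powr e * real L powr (- e)" by simp
    also have "\<dots> \<le> nu q * real L powr (- e)"
      using nu_bound[OF q2] by (intro mult_right_mono) (auto simp: e_def)
    finally show ?thesis by simp
  qed
  ultimately show ?thesis using N1 by (auto simp: e_def)
qed

section \<open>Cyclo-symmetric channels\<close>

lemma mod_add_right_cancel:
  fixes a b t q :: nat
  assumes "(a + t) mod q = (b + t) mod q"
  shows "a mod q = b mod q"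
proof -
  have "(int a + int t) mod int q = (int b + int t) mod int q"
    using assms by (metis of_nat_add zmod_int)
  then have "(int a + int t - int t) mod int q = (int b + int t - int t) mod int q"
    by (metis mod_diff_left_eq)
  then show ?thesis by (simp flip: zmod_int)
qed

lemma mod_add_diff_cancel:
  fixes x t q :: nat
  assumes "t \<le> q"
  shows "((x + (q - t)) mod q + t) mod q = x mod q"
proof -
  have "((x + (q - t)) mod q + t) mod q = (x + (q - t) + t) mod q" by (simp add: mod_add_left_eq)
  also have "x + (q - t) + t = x + q" using assms by simp
  finally show ?thesis by simp
qed

lemma bij_betw_mod_add: "bij_betw (\<lambda>x. (x + t) mod q) {..<q} {..<q::nat}"
proof -
  have inj: "inj_on (\<lambda>x. (x + t) mod q) {..<q}"
  proof (rule inj_onI)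
    fix x y assume "x \<in> {..<q}" "y \<in> {..<q}" "(x + t) mod q = (y + t) mod q"
    then show "x = y" using mod_add_right_cancel[of x t q y] by simp
  qed
  moreover have "(\<lambda>x. (x + t) mod q) ` {..<q} \<subseteq> {..<q}" by auto
  ultimately have "(\<lambda>x. (x + t) mod q) ` {..<q} = {..<q}" by (intro endo_inj_surj) auto
  with inj show ?thesis by (simp add: bij_betw_def)
qed

lemma sum_mod_add: "(\<Sum>x<q. g ((x + t) mod q)) = (\<Sum>x<q::nat. g x)"
  using sum.reindex_bij_betw[OF bij_betw_mod_add] .

lemma bij_betw_mult_add: "bij_betw (\<lambda>(c, \<theta>). c * q + \<theta>) ({..<M} \<times> {..<q}) {..<M * (q::nat)}"
proof (rule bij_betwI[where g = "\<lambda>z. (z div q, z mod q)"])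
  show "(\<lambda>(c, \<theta>). c * q + \<theta>) \<in> {..<M} \<times> {..<q} \<rightarrow> {..<M * q}"
  proof
    fix p assume "p \<in> {..<M} \<times> {..<q}"
    then obtain c \<theta> where "p = (c, \<theta>)" "c < M" "\<theta> < q" by auto
    then have "c * q + \<theta> < (c + 1) * q" by simp
    also have "\<dots> \<le> M * q" using \<open>c < M\<close> by (intro mult_right_mono) auto
    finally show "(case p of (c, \<theta>) \<Rightarrow> c * q + \<theta>) \<in> {..<M * q}" using \<open>p = _\<close> by simp
  qed
  show "(\<lambda>z. (z div q, z mod q)) \<in> {..<M * q} \<rightarrow> {..<M} \<times> {..<q}"
    by (auto simp: less_mult_imp_div_less) (metis mod_less_divisor mult_zero_right not_less0 zero_less_iff_neq_zero)
qed auto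

locale cyclo_blocks =
  fixes q :: nat and Y :: "'y set" and W :: "nat \<Rightarrow> 'y \<Rightarrow> real"
    and m :: nat and f :: "nat \<Rightarrow> nat \<Rightarrow> 'y"
  assumes channel: "channel q Y W"
    and q_pos: "0 < q"
    and blocks: "bij_betw (\<lambda>(i, t). f i t) ({..<m} \<times> {..<q}) Y"
    and cyclic: "\<And>i x \<theta>. i < m \<Longrightarrow> x < q \<Longrightarrow> \<theta> < q \<Longrightarrow> W x (f i 0) = W ((x + \<theta>) mod q) (f i \<theta>)"
begin

definition mass :: "'y \<Rightarrow> real" where
  "mass y = (\<Sum>x<q. W x y)"

lemma W_nonneg: "x < q \<Longrightarrow> y \<in> Y \<Longrightarrow> 0 \<le> W x y"
  using channel by (simp add: channel_def)

lemma f_in_Y: "i < m \<Longrightarrow> t < q \<Longrightarrow> f i t \<in> Y"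
  using bij_betwE[OF blocks] by auto

lemma sum_blocks: "(\<Sum>y\<in>Y. g y) = (\<Sum>i<m. \<Sum>t<q. g (f i t))"
  using sum.reindex_bij_betw[OF blocks, of g] by (simp add: sum.cartesian_product case_prod_beta)

lemma W_shift:
  assumes "i < m" "x < q" "t < q"
  shows "W ((x + \<theta>) mod q) (f i ((t + \<theta>) mod q)) = W x (f i t)"
proof -
  define x' where "x' = (x + (q - t)) mod q"
  have x': "x' < q" and x't: "(x' + t) mod q = x"
    using assms q_pos mod_add_diff_cancel[of t q x] by (simp_all add: x'_def)
  have "W x' (f i 0) = W x (f i t)" using cyclic[OF assms(1) x' assms(3)] x't by simp
  moreover have "(x' + (t + \<theta>) mod q) mod q = ((x' + t) mod q + \<theta>) mod q"
    by (simp add: mod_add_right_eq mod_add_left_eq add.assoc)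
  ultimately show ?thesis using cyclic[OF assms(1) x', of "(t + \<theta>) mod q"] q_pos x't by simp
qed

lemma mass_f:
  assumes "i < m" "t < q"
  shows "mass (f i t) = mass (f i 0)"
proof -
  have "mass (f i 0) = (\<Sum>x<q. W ((x + t) mod q) (f i t))"
    unfolding mass_def using W_shift[OF assms(1) _ q_pos, of _ t] assms(2)
    by (intro sum.cong refl) simp
  also have "\<dots> = mass (f i t)" unfolding mass_def by (rule sum_mod_add)
  finally show ?thesis by simp
qed

lemma posterior_shift:
  assumes "i < m" "x < q" "t < q"
  shows "posterior q W (f i ((t + \<theta>) mod q)) ((x + \<theta>) mod q) = posterior q W (f i t) x"
proof -
  have "(t + \<theta>) mod q < q" using q_pos by simp
  then have "mass (f i ((t + \<theta>) mod q)) = mass (f i t)"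
    using mass_f[OF assms(1)] assms(3) by metis
  then show ?thesis unfolding posterior_def mass_def[symmetric] W_shift[OF assms] by simp
qed

definition block_of :: "'y \<Rightarrow> nat \<times> nat" where
  "block_of = the_inv_into ({..<m} \<times> {..<q}) (\<lambda>(i, t). f i t)"

lemma block_of_f: "i < m \<Longrightarrow> t < q \<Longrightarrow> block_of (f i t) = (i, t)"
  using the_inv_into_f_f[OF bij_betw_imp_inj_on[OF blocks], of "(i, t)"] by (simp add: block_of_def)

lemma obtain_block:
  assumes "y \<in> Y"
  obtains i t where "i < m" "t < q" "y = f i t"
  using assms bij_betw_imp_surj_on[OF blocks] by force

text \<open>Block \<open>i\<close> goes to the cell \<open>c i\<close> of the merged channel, rotated by \<open>s i\<close>; the merged output
  \<open>b * q + \<theta>\<close> stands for position \<open>\<theta>\<close> of cell \<open>b\<close>.\<close>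

definition relabel :: "(nat \<Rightarrow> nat) \<Rightarrow> (nat \<Rightarrow> nat) \<Rightarrow> 'y \<Rightarrow> nat" where
  "relabel c s y = (case block_of y of (i, t) \<Rightarrow> c i * q + (s i + t) mod q)"

lemma relabel_f: "i < m \<Longrightarrow> t < q \<Longrightarrow> relabel c s (f i t) = c i * q + (s i + t) mod q"
  by (simp add: relabel_def block_of_f)

lemma relabel_f_eq_iff:
  assumes "i < m" "t < q" "\<theta> < q"
  shows "relabel c s (f i t) = b * q + \<theta> \<longleftrightarrow> c i = b \<and> (s i + t) mod q = \<theta>"
proof
  assume "relabel c s (f i t) = b * q + \<theta>"
  then have "c i * q + (s i + t) mod q = b * q + \<theta>" using assms by (simp add: relabel_f)
  then have "(c i * q + (s i + t) mod q) div q = (b * q + \<theta>) div q"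
    and "(c i * q + (s i + t) mod q) mod q = (b * q + \<theta>) mod q" by simp_all
  then show "c i = b \<and> (s i + t) mod q = \<theta>" using assms q_pos by simp
qed (use assms in \<open>simp add: relabel_f\<close>)

lemma relabel_image:
  assumes "\<And>i. i < m \<Longrightarrow> c i < M"
  shows "relabel c s ` Y \<subseteq> {..<M * q}"
proof
  fix z assume "z \<in> relabel c s ` Y"
  then obtain i t where "i < m" "t < q" "z = c i * q + (s i + t) mod q"
    by (auto simp: relabel_f elim: obtain_block)
  then show "z \<in> {..<M * q}"
    using bij_betwE[OF bij_betw_mult_add[of q M]] assms q_pos by force
qed

lemma merge_relabel:
  assumes "\<theta> < q"
  shows "merge_outputs Y (relabel c s) W x (b * q + \<theta>)
    = (\<Sum>i<m. \<Sum>t<q. if c i = b \<and> (s i + t) mod q = \<theta> then W x (f i t) else 0)"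
proof -
  have "merge_outputs Y (relabel c s) W x (b * q + \<theta>) = (\<Sum>y\<in>Y. if relabel c s y = b * q + \<theta> then W x y else 0)"
    using channel by (simp add: merge_outputs_def channel_def sum.inter_filter)
  also have "\<dots> = (\<Sum>i<m. \<Sum>t<q. if c i = b \<and> (s i + t) mod q = \<theta> then W x (f i t) else 0)"
    unfolding sum_blocks using relabel_f_eq_iff assms by (intro sum.cong refl) auto
  finally show ?thesis .
qed

lemma cyclo_symmetric_merge_relabel:
  assumes "\<And>i. i < m \<Longrightarrow> c i < M"
  shows "cyclo_symmetric q {..<M * q} (merge_outputs Y (relabel c s) W)"
  unfolding cyclo_symmetric_def
proof (intro conjI exI allI impI)
  show "bij_betw (\<lambda>(b, \<theta>). b * q + \<theta>) ({..<M} \<times> {..<q}) {..<M * q}" by (rule bij_betw_mult_add)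
  fix b x \<theta> assume "b < M" and x: "x < q" and \<theta>: "\<theta> < q"
  have rotated_cell: "(s i + (t + \<theta>) mod q) mod q = \<theta> \<longleftrightarrow> (s i + t) mod q = 0" for i t
  proof -
    have "(s i + (t + \<theta>) mod q) mod q = (s i + t + \<theta>) mod q" by (simp add: mod_add_right_eq add.assoc)
    moreover have "(s i + t + \<theta>) mod q = (0 + \<theta>) mod q \<longleftrightarrow> (s i + t) mod q = 0"
      using mod_add_right_cancel[of "s i + t" \<theta> q 0] mod_add_left_eq[of "s i + t" q \<theta>] by auto
    ultimately show ?thesis using \<theta> by simp
  qed
  let ?Q = "merge_outputs Y (relabel c s) W"
  have "?Q ((x + \<theta>) mod q) (b * q + \<theta>)
      = (\<Sum>i<m. \<Sum>t<q. if c i = b \<and> (s i + t) mod q = \<theta> then W ((x + \<theta>) mod q) (f i t) else 0)"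
    by (rule merge_relabel[OF \<theta>])
  also have "\<dots> = (\<Sum>i<m. \<Sum>t<q. if c i = b \<and> (s i + (t + \<theta>) mod q) mod q = \<theta>
                     then W ((x + \<theta>) mod q) (f i ((t + \<theta>) mod q)) else 0)"
  proof (rule sum.cong[OF refl])
    fix i
    show "(\<Sum>t<q. if c i = b \<and> (s i + t) mod q = \<theta> then W ((x + \<theta>) mod q) (f i t) else 0)
        = (\<Sum>t<q. if c i = b \<and> (s i + (t + \<theta>) mod q) mod q = \<theta>
             then W ((x + \<theta>) mod q) (f i ((t + \<theta>) mod q)) else 0)"
      by (rule sum_mod_add[where g = "\<lambda>t. if c i = b \<and> (s i + t) mod q = \<theta> then W ((x + \<theta>) mod q) (f i t) else 0", symmetric])
  qed
  also have "\<dots> = (\<Sum>i<m. \<Sum>t<q. if c i = b \<and> (s i + t) mod q = 0 then W x (f i t) else 0)"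
    unfolding rotated_cell using x by (intro sum.cong refl) (simp add: W_shift)
  also have "\<dots> = ?Q x (b * q + 0)" using merge_relabel[of 0] q_pos by simp
  finally show "?Q x (b * q + 0) = ?Q ((x + \<theta>) mod q) (b * q + \<theta>)" by simp
qed simp

lemma obtain_relabel_cell:
  assumes "y \<in> Y" and "relabel c s y = z"
  obtains i t where "i < m" "t < q" "y = f i t" "c i = z div q" "(s i + t) mod q = z mod q"
proof -
  obtain i t where "i < m" "t < q" "y = f i t" using assms(1) by (rule obtain_block)
  moreover have "z = c i * q + (s i + t) mod q" using assms(2) calculation by (simp add: relabel_f)
  ultimately show ?thesis using q_pos that by simp
qed

lemma posterior_relative:
  fixes s :: "nat \<Rightarrow> nat"
  assumes "i < m" "t < q" "x < q"
  defines "d \<equiv> (x + (q - (s i + t) mod q)) mod q"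
  shows "posterior q W (f i t) x = posterior q W (f i 0) ((s i + d) mod q)"
proof -
  have "((s i + d) mod q + t) mod q = ((s i + t) mod q + d) mod q"
    by (simp add: mod_add_left_eq mod_add_right_eq ac_simps)
  also have "\<dots> = x"
    using mod_add_diff_cancel[of "(s i + t) mod q" q x] assms(3) q_pos
    by (simp add: d_def add.commute[of "(s i + t) mod q"] less_imp_le)
  finally have "((s i + d) mod q + t) mod q = x" .
  then show ?thesis
    using posterior_shift[OF assms(1) _ q_pos, of "(s i + d) mod q" t] assms(2) by simp
qed

definition argmax_inputs :: "(nat \<Rightarrow> nat) \<Rightarrow> bool" where
  "argmax_inputs s \<longleftrightarrow> (\<forall>i<m. s i < q \<and> (\<forall>x<q. W x (f i 0) \<le> W (s i) (f i 0)))"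

lemma exists_argmax_inputs: "\<exists>s. argmax_inputs s"
proof -
  have "\<exists>j<q. \<forall>x<q. W x (f i 0) \<le> W j (f i 0)" for i
  proof -
    let ?S = "(\<lambda>x. W x (f i 0)) ` {..<q}"
    have "Max ?S \<in> ?S" using q_pos by (intro Max_in) auto
    then obtain j where "j < q" "W j (f i 0) = Max ?S" by auto
    then show ?thesis by (metis Max_ge finite_imageI finite_lessThan imageI lessThan_iff)
  qed
  then show ?thesis unfolding argmax_inputs_def by metis
qed

lemma posterior_argmax_ge:
  assumes "argmax_inputs s" "i < m" "0 < (\<Sum>x<q. W x (f i 0))"
  shows "1 / q \<le> posterior q W (f i 0) (s i)"
proof -
  have "(\<Sum>x<q. W x (f i 0)) \<le> (\<Sum>x<q. W (s i) (f i 0))"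
    using assms(1,2) unfolding argmax_inputs_def by (intro sum_mono) auto
  then show ?thesis using assms(3) q_pos by (simp add: posterior_def field_simps)
qed

lemma posterior_off_argmax_le:
  assumes "argmax_inputs s" "i < m" "x < q" "x \<noteq> s i"
  shows "posterior q W (f i 0) x \<le> 1 / 2"
proof -
  have s: "s i < q" "W x (f i 0) \<le> W (s i) (f i 0)"
    using assms unfolding argmax_inputs_def by auto
  have "W x (f i 0) + W (s i) (f i 0) = (\<Sum>x'\<in>{x, s i}. W x' (f i 0))" using assms(4) by simp
  also have "\<dots> \<le> (\<Sum>x'<q. W x' (f i 0))"
    using assms(2,3) s q_pos W_nonneg f_in_Y by (intro sum_mono2) auto
  finally have "2 * W x (f i 0) \<le> (\<Sum>x'<q. W x' (f i 0))" using s(2) by simp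
  moreover have "0 \<le> W x (f i 0)" using W_nonneg assms(2,3) f_in_Y q_pos by simp
  ultimately show ?thesis
    by (cases "(\<Sum>x'<q. W x' (f i 0)) = 0") (simp_all add: posterior_def field_simps)
qed

text \<open>Positions \<open>d\<close> are counted from the most likely input \<open>s i\<close> of the block.\<close>

definition sqrt_code :: "nat \<Rightarrow> (nat \<Rightarrow> nat) \<Rightarrow> nat \<Rightarrow> nat \<Rightarrow> nat" where
  "sqrt_code N s i = (\<lambda>d\<in>{1..<q}. nat \<lfloor>real N * sqrt (posterior q W (f i 0) ((s i + d) mod q))\<rfloor>)"

lemma sqrt_code_in:
  assumes "argmax_inputs s" "0 < N" "i < m"
  shows "sqrt_code N s i \<in> {1..<q} \<rightarrow>\<^sub>E {..<N}"
proof -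
  have "nat \<lfloor>real N * sqrt (posterior q W (f i 0) ((s i + d) mod q))\<rfloor> < N" if "d \<in> {1..<q}" for d
  proof -
    have "s i < q" using assms unfolding argmax_inputs_def by auto
    then have "(s i + d) mod q \<noteq> s i"
      using that mod_add_right_cancel[of d "s i" q 0] by (auto simp: add.commute)
    then have "posterior q W (f i 0) ((s i + d) mod q) \<le> 1 / 2"
      using posterior_off_argmax_le[OF assms(1,3)] q_pos by simp
    then have "sqrt (posterior q W (f i 0) ((s i + d) mod q)) < 1" by simp
    then have "real N * sqrt (posterior q W (f i 0) ((s i + d) mod q)) < real N"
      using assms(2) by simp
    then have "\<lfloor>real N * sqrt (posterior q W (f i 0) ((s i + d) mod q))\<rfloor> < int N"
      by (simp only: floor_less_iff of_int_of_nat_eq)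
    then show ?thesis using assms(2) by simp
  qed
  then show ?thesis by (simp add: sqrt_code_def)
qed

lemma posterior_nonneg: "y \<in> Y \<Longrightarrow> x < q \<Longrightarrow> 0 \<le> posterior q W y x"
  unfolding posterior_def using W_nonneg by (auto intro!: divide_nonneg_nonneg sum_nonneg)

lemma sqrt_binned_relabel:
  assumes s: "argmax_inputs s" and N: "0 < N"
    and code: "\<And>i i'. i < m \<Longrightarrow> i' < m \<Longrightarrow> c i = c i' \<Longrightarrow> sqrt_code N s i = sqrt_code N s i'"
  shows "sqrt_binned q (real N) W {y\<in>Y. relabel c s y = z \<and> 0 < (\<Sum>x<q. W x y)}"
proof -
  define j where "j = z mod q"
  let ?S = "{y\<in>Y. relabel c s y = z \<and> 0 < (\<Sum>x<q. W x y)}"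
  have dominant: "1 / q \<le> posterior q W y j" if "y \<in> ?S" for y
  proof -
    from that have "y \<in> Y" "relabel c s y = z" by auto
    then obtain i t where it: "i < m" "t < q" "y = f i t" "(s i + t) mod q = j"
      unfolding j_def by (rule obtain_relabel_cell)
    have "posterior q W y j = posterior q W (f i 0) (s i)"
      using posterior_shift[OF it(1) _ q_pos, of "s i" t] s it by (simp add: argmax_inputs_def)
    moreover have "0 < (\<Sum>x<q. W x (f i 0))" using that it mass_f[OF it(1,2)] by (simp add: mass_def)
    ultimately show ?thesis using posterior_argmax_ge[OF s it(1)] by simp
  qed
  have binned: "\<exists>k::nat. \<forall>y\<in>?S. posterior q W y x \<in> {(real k / real N)^2..((real k + 1) / real N)^2}"
    if x: "x < q" "x \<noteq> j" for x
  proof (cases "?S = {}")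
    case False
    then obtain y0 where "y0 \<in> Y" "relabel c s y0 = z" by auto
    then obtain i0 where i0: "i0 < m" "c i0 = z div q" by (rule obtain_relabel_cell)
    define d where "d = (x + (q - j)) mod q"
    have "(d + j) mod q = x" using mod_add_diff_cancel[of j q x] x q_pos by (simp add: d_def j_def)
    then have d: "d \<in> {1..<q}" using x q_pos j_def by (cases "d = 0") (auto simp: d_def)
    show ?thesis
    proof (intro exI ballI)
      fix y assume "y \<in> ?S"
      then have "y \<in> Y" "relabel c s y = z" by auto
      then obtain i t where it: "i < m" "t < q" "y = f i t" "c i = z div q" "(s i + t) mod q = j"
        unfolding j_def by (rule obtain_relabel_cell)
      have "posterior q W y x = posterior q W (f i 0) ((s i + d) mod q)"
        using posterior_relative[OF it(1,2) x(1), of s] it by (simp add: d_def)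
      moreover have "sqrt_code N s i0 d = nat \<lfloor>real N * sqrt (posterior q W (f i 0) ((s i + d) mod q))\<rfloor>"
      proof -
        have "sqrt_code N s i0 d = sqrt_code N s i d" using code[OF it(1) i0(1)] it(4) i0(2) by simp
        then show ?thesis using d by (simp add: sqrt_code_def)
      qed
      ultimately show "posterior q W y x
          \<in> {(real (sqrt_code N s i0 d) / real N)^2..((real (sqrt_code N s i0 d) + 1) / real N)^2}"
        using sqrt_bin_floor[of "real N"] N posterior_nonneg f_in_Y it(1,2) x(1) q_pos by simp
    qed
  qed auto
  have "j < q" using q_pos by (simp add: j_def)
  then show ?thesis unfolding sqrt_binned_def using dominant binned by blast
qed

lemma exists_degraded_cyclo_symmetric:
  assumes N: "0 < N"
  shows "\<exists>(Z :: nat set) (Q :: nat \<Rightarrow> nat \<Rightarrow> real).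
           channel q Z Q \<and> degraded q Y W Z Q \<and> card Z = q * N^(q - 1) \<and> cyclo_symmetric q Z Q \<and>
           mutual_info q Y (uniform q) W - mutual_info q Z (uniform q) Q \<le> 9/4 * (real q^2 - 1) / (real N)^2"
proof -
  obtain s where s: "argmax_inputs s" using exists_argmax_inputs by blast
  define B where "B = {1..<q} \<rightarrow>\<^sub>E {..<N}"
  obtain enc where enc: "bij_betw enc B {..<card B}"
    using ex_bij_betw_finite_nat[of B] by (auto simp: B_def atLeast0LessThan finite_PiE)
  define c where "c i = enc (sqrt_code N s i)" for i
  have code_B: "sqrt_code N s i \<in> B" if "i < m" for i
    using sqrt_code_in[OF s N that] by (simp add: B_def)
  have c_less: "c i < card B" if "i < m" for i
    using bij_betwE[OF enc] code_B[OF that] by (auto simp: c_def)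
  have same_code: "sqrt_code N s i = sqrt_code N s i'" if "i < m" "i' < m" "c i = c i'" for i i'
    using bij_betw_imp_inj_on[OF enc] code_B that by (auto simp: c_def inj_on_def)
  define Z where "Z = {..<card B * q}"
  have Z: "finite Z" "relabel c s ` Y \<subseteq> Z" using relabel_image[OF c_less] by (auto simp: Z_def)
  have "mutual_info q Y (uniform q) W - mutual_info q Z (uniform q) (merge_outputs Y (relabel c s) W)
      \<le> 9/4 * (real q^2 - 1) / (real N)^2"
    using sqrt_binned_relabel[OF s N same_code] N q_pos
    by (intro mutual_info_merge_outputs_loss_le[OF channel q_pos _ Z]) auto
  then show ?thesis
    using channel_merge_outputs[OF channel Z] degraded_merge_outputs[OF channel Z]
      cyclo_symmetric_merge_relabel[OF c_less]
    by (intro exI[of _ Z] exI[of _ "merge_outputs Y (relabel c s) W"])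
      (auto simp: Z_def B_def card_PiE mult.commute)
qed

end

theorem theorem8:
  fixes q :: nat and Y :: "'y set" and W :: "nat \<Rightarrow> 'y \<Rightarrow> real" and L :: nat
  assumes "channel q Y W"
    and "cyclo_symmetric q Y W"
    and "card Y > 2 * q"
    and "L \<ge> 2 * q"
    and "q dvd L"
  shows "\<exists>(Z :: nat set) (Q :: nat \<Rightarrow> nat \<Rightarrow> real).
           channel q Z Q \<and> degraded q Y W Z Q \<and> card Z \<le> L \<and> cyclo_symmetric q Z Q \<and>
           mutual_info q Y (uniform q) W - mutual_info q Z (uniform q) Q
             \<le> nu q * real L powr (- 2 / (real q - 1))"
proof -
  obtain m :: nat and f :: "nat \<Rightarrow> nat \<Rightarrow> 'y" where blocks: "bij_betw (\<lambda>(i, t). f i t) ({..<m} \<times> {..<q}) Y"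
    and cyclic: "\<forall>i<m. \<forall>x<q. \<forall>\<theta><q. W x (f i 0) = W ((x + \<theta>) mod q) (f i \<theta>)"
    using assms(2) unfolding cyclo_symmetric_def by blast
  have q_pos: "0 < q" using assms(2,3) unfolding cyclo_symmetric_def by (cases q) auto
  interpret cyclo_blocks q Y W m f
    using assms(1) q_pos blocks cyclic by unfold_locales blast+
  obtain N :: nat where "1 \<le> N" and "q * N^(q - 1) \<le> L"
    and "9/4 * (real q^2 - 1) / (real N)^2 \<le> nu q * real L powr (- 2 / (real q - 1))"
    using exists_grid_resolution[of q L] q_pos assms(4) by auto
  with exists_degraded_cyclo_symmetric[of N] show ?thesis by fastforce
qed

end
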